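(* Let $\mathbf Q$, $(Z_n)$ be as in the context. For all $k\ge0$ and $n\ge1$, $\mathbf Q[Z_1\le k\mid Z_n=0]\ge\mathbf Q[Z_1\le k]$. In particular, $E_{\mathbf Q}[Z_i\mid Z_n=0]\le\mathbf f'(q)^i$ for all $i\ge0$ and $n\ge1$.
   Context: $(p_k)_{k\ge0}$ is a probability distribution on $\{0,1,\dots\}$ with generating function $\mathbf f$, $p_0>0$ and $\mathbf f'(1)\in(1,\infty)$; $q\in(0,1)$ is its extinction probability ($\mathbf f(q)=q$). $\mathbf Q$ is the law of a Galton–Watson tree with offspring distribution $q_k=p_kq^{k-1}$, $k\ge0$, which has mean $\mathbf f'(q)<1$; $Z_n$ denotes the number of vertices in generation $n$ ($Z_0=1$). *)

theory Defs
  imports "HOL-Probability.Probability"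
begin

definition gen :: "(nat \<Rightarrow> real) \<Rightarrow> real \<Rightarrow> real" where
  "gen p s = (\<Sum>k. p k * s ^ k)"

text \<open>The offspring law q_k = p_k q^(k-1) (written p_k q^k / q to avoid nat subtraction).\<close>
definition offspring_pmf :: "(nat \<Rightarrow> real) \<Rightarrow> real \<Rightarrow> nat pmf" where
  "offspring_pmf p q = embed_pmf (\<lambda>k. p k * q ^ k / q)"

fun sum_iid :: "nat pmf \<Rightarrow> nat \<Rightarrow> nat pmf" where
  "sum_iid d 0 = return_pmf 0"
| "sum_iid d (Suc j) = bind_pmf (sum_iid d j) (\<lambda>s. map_pmf (\<lambda>x. s + x) d)"

text \<open>Joint law of the generation sizes [Z_0, Z_1, ..., Z_n] of a Galton--Watson
  tree with offspring law d (Z_0 = 1).\<close>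
fun gw_gens :: "nat pmf \<Rightarrow> nat \<Rightarrow> nat list pmf" where
  "gw_gens d 0 = return_pmf [1]"
| "gw_gens d (Suc n) =
     bind_pmf (gw_gens d n) (\<lambda>zs. map_pmf (\<lambda>m. zs @ [m]) (sum_iid d (last zs)))"

end

theory Submission
  imports Defs
begin

text \<open>Write \<open>u\<^sub>t(z)\<close> for the probability that a Galton--Watson process started from \<open>z\<close>
  individuals is extinct after \<open>t\<close> generations. By the Markov property, for \<open>i \<le> n\<close>
  conditioning on \<open>{Z\<^sub>n = 0}\<close> reweights the law of \<open>Z\<^sub>i\<close> by \<open>u\<^sub>n\<^sub>-\<^sub>i(Z\<^sub>i)\<close>, and \<open>u\<^sub>t\<close> is
  antitone since more individuals can only produce more offspring. By Chebyshev's
  correlation inequality on the totally ordered state space, the reweighting increases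
  the expectation of antitone functions of \<open>Z\<^sub>i\<close> (such as the indicator of \<open>Z\<^sub>1 \<le> k\<close>)
  and decreases that of \<open>Z\<^sub>i\<close> itself, whose unconditional mean is \<open>f'(q)\<^sup>i\<close>. For \<open>i > n\<close>
  the process stays extinct, so the conditional mean of \<open>Z\<^sub>i\<close> vanishes.\<close>

section \<open>Chebyshev's correlation inequality for discrete distributions\<close>

lemma ennreal_rearrangement:
  fixes a b c e :: real
  assumes "0 \<le> a" "0 \<le> b" "0 \<le> c" "0 \<le> e" "0 \<le> (a - b) * (c - e)"
  shows "ennreal a * ennreal e + ennreal b * ennreal c \<le> ennreal a * ennreal c + ennreal b * ennreal e"
proof -
  have "a * e + b * c \<le> a * c + b * e" using assms(5) by (simp add: algebra_simps)
  then have "ennreal (a * e + b * c) \<le> ennreal (a * c + b * e)" by (rule ennreal_leI)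
  then show ?thesis using assms(1-4) by (simp add: ennreal_mult)
qed

lemma nn_integral_pmf_diag_double:
  fixes M :: "'a pmf"
  shows "(\<integral>\<^sup>+x. (\<integral>\<^sup>+y. h x + h y \<partial>M) \<partial>M) = 2 * (\<integral>\<^sup>+x. h x \<partial>M)"
  by (simp add: nn_integral_add measure_pmf.emeasure_space_1 mult_2)

lemma nn_integral_pmf_cross_double:
  fixes M :: "'a pmf"
  shows "(\<integral>\<^sup>+x. (\<integral>\<^sup>+y. f x * g y + f y * g x \<partial>M) \<partial>M) =
   2 * ((\<integral>\<^sup>+x. f x \<partial>M) * (\<integral>\<^sup>+x. g x \<partial>M))"
  by (simp add: nn_integral_add nn_integral_cmult nn_integral_multc mult_2)

lemma nn_integral_pmf_similarly_ordered:
  fixes f g :: "'a \<Rightarrow> real" and M :: "'a pmf"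
  assumes "\<And>x. 0 \<le> f x" "\<And>x. 0 \<le> g x" "\<And>x y. 0 \<le> (f x - f y) * (g x - g y)"
  shows "(\<integral>\<^sup>+x. f x \<partial>M) * (\<integral>\<^sup>+x. g x \<partial>M) \<le> (\<integral>\<^sup>+x. ennreal (f x) * ennreal (g x) \<partial>M)"
proof -
  have "2 * ((\<integral>\<^sup>+x. f x \<partial>M) * (\<integral>\<^sup>+x. g x \<partial>M)) \<le>
        2 * (\<integral>\<^sup>+x. ennreal (f x) * ennreal (g x) \<partial>M)"
    unfolding nn_integral_pmf_diag_double[symmetric] nn_integral_pmf_cross_double[symmetric]
    using assms by (intro nn_integral_mono ennreal_rearrangement)
  then show ?thesis by (simp add: ennreal_mult_le_mult_iff)
qed

lemma nn_integral_pmf_oppositely_ordered: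
  fixes f g :: "'a \<Rightarrow> real" and M :: "'a pmf"
  assumes "\<And>x. 0 \<le> f x" "\<And>x. 0 \<le> g x" "\<And>x y. (f x - f y) * (g x - g y) \<le> 0"
  shows "(\<integral>\<^sup>+x. ennreal (f x) * ennreal (g x) \<partial>M) \<le> (\<integral>\<^sup>+x. f x \<partial>M) * (\<integral>\<^sup>+x. g x \<partial>M)"
proof -
  have "2 * (\<integral>\<^sup>+x. ennreal (f x) * ennreal (g x) \<partial>M) \<le>
        2 * ((\<integral>\<^sup>+x. f x \<partial>M) * (\<integral>\<^sup>+x. g x \<partial>M))"
    unfolding nn_integral_pmf_diag_double[symmetric] nn_integral_pmf_cross_double[symmetric]
  proof (intro nn_integral_mono)
    fix x y
    have "0 \<le> (f x - f y) * (g y - g x)"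
      using assms(3)[of x y] by (simp add: mult_le_0_iff mult_nonneg_nonneg algebra_simps)
    then show "ennreal (f x) * ennreal (g x) + ennreal (f y) * ennreal (g y)
               \<le> ennreal (f x) * ennreal (g y) + ennreal (f y) * ennreal (g x)"
      using ennreal_rearrangement[of "f x" "f y" "g y" "g x"] assms(1,2) by simp
  qed
  then show ?thesis by (simp add: ennreal_mult_le_mult_iff)
qed

lemma antimono_similarly_ordered:
  fixes f g :: "'a::linorder \<Rightarrow> real"
  assumes "antimono f" "antimono g"
  shows "0 \<le> (f x - f y) * (g x - g y)"
proof (cases "x \<le> y")
  case True
  then have "f y \<le> f x" "g y \<le> g x" using assms by (auto dest: antimonoD)
  then show ?thesis by (simp add: mult_nonneg_nonneg)
next
  case False
  then have "y \<le> x" by simp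
  then have "f x \<le> f y" "g x \<le> g y" using assms by (auto dest: antimonoD)
  then show ?thesis by (simp add: mult_nonpos_nonpos)
qed

section \<open>The offspring law \<open>q\<^sub>k = p\<^sub>k q\<^sup>k\<^sup>-\<^sup>1\<close>\<close>

lemma gen_has_field_derivative:
  fixes x :: real
  assumes "summable p" "\<bar>x\<bar> < 1"
  shows "(gen p has_field_derivative (\<Sum>n. diffs p n * x ^ n)) (at x)"
proof -
  have "gen p = (\<lambda>x. \<Sum>n. p n * x ^ n)" by (rule ext) (simp add: gen_def)
  then show ?thesis using termdiffs_strong[where K=1 and c=p and x=x] assms by simp
qed

lemma sums_deriv_gen:
  fixes q :: real
  assumes "summable p" "0 < q" "q < 1"
  shows "(\<lambda>k. real k * p k * q ^ k / q) sums deriv (gen p) q"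
proof -
  have "summable (\<lambda>n. p n * x ^ n)" if "norm x < 1" for x :: real
    using powser_insidea[of p 1 x] assms(1) that by (simp add: summable_norm_cancel)
  then have "summable (\<lambda>n. diffs p n * q ^ n)"
    using assms by (intro termdiff_converges[where K=1]) auto
  then have "(\<lambda>n. diffs p n * q ^ n) sums deriv (gen p) q"
    using DERIV_imp_deriv[OF gen_has_field_derivative[OF assms(1)]] assms(2,3)
    by (simp add: summable_sums)
  moreover have "diffs p n * q ^ n = real (Suc n) * p (Suc n) * q ^ Suc n / q" for n
    using assms(2) by (simp add: diffs_def)
  ultimately have "(\<lambda>n. real (Suc n) * p (Suc n) * q ^ Suc n / q) sums deriv (gen p) q"
    by simp
  then show ?thesis
    using sums_Suc_iff[of "\<lambda>k. real k * p k * q ^ k / q" "deriv (gen p) q"] by simp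
qed

lemma pmf_offspring_pmf:
  fixes p :: "nat \<Rightarrow> real"
  assumes nonneg: "\<And>k. 0 \<le> p k" and "summable p" and "0 < q" "q < 1" and "gen p q = q"
  shows "pmf (offspring_pmf p q) k = p k * q ^ k / q"
proof -
  have nonneg': "\<And>k. 0 \<le> p k * q ^ k / q" using nonneg assms(3) by simp
  have "summable (\<lambda>k. p k * q ^ k)"
    using assms(2) by (rule summable_comparison_test')
      (use nonneg assms(3,4) in \<open>auto intro!: mult_left_le simp: power_le_one\<close>)
  then have "(\<lambda>k. p k * q ^ k / q) sums (gen p q / q)"
    unfolding gen_def by (intro sums_divide summable_sums)
  then have "(\<lambda>k. p k * q ^ k / q) sums 1" using assms(3,5) by simp
  then have "(\<integral>\<^sup>+k. ennreal (p k * q ^ k / q) \<partial>count_space UNIV) = 1"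
    using nonneg' by (simp add: nn_integral_count_space_nat suminf_ennreal_eq sums_iff)
  then show ?thesis
    unfolding offspring_pmf_def by (rule pmf_embed_pmf[OF nonneg'])
qed

lemma nn_integral_offspring_pmf_real:
  fixes p :: "nat \<Rightarrow> real"
  assumes nonneg: "\<And>k. 0 \<le> p k" and "summable p" and "0 < q" "q < 1" and "gen p q = q"
  shows "(\<integral>\<^sup>+x. ennreal (real x) \<partial>offspring_pmf p q) = ennreal (deriv (gen p) q)"
proof -
  have "(\<integral>\<^sup>+x. ennreal (real x) \<partial>offspring_pmf p q) =
        (\<integral>\<^sup>+k. ennreal (real k * p k * q ^ k / q) \<partial>count_space UNIV)"
    unfolding nn_integral_measure_pmf using assms
    by (intro nn_integral_cong) (simp add: pmf_offspring_pmf ennreal_mult''[symmetric])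
  also have "\<dots> = ennreal (deriv (gen p) q)"
    using sums_deriv_gen[OF assms(2-4)] nonneg assms(3)
    by (simp add: nn_integral_count_space_nat suminf_ennreal_eq sums_iff)
  finally show ?thesis .
qed

section \<open>Generation sizes of a Galton--Watson tree\<close>

text \<open>\<open>gw_kernel d t z\<close> is the law of \<open>Z\<^sub>t\<close> started from \<open>z\<close> individuals, so
  \<open>u\<^sub>t(z) = pmf (gw_kernel d t z) 0\<close>.\<close>

fun gw_kernel :: "nat pmf \<Rightarrow> nat \<Rightarrow> nat \<Rightarrow> nat pmf" where
  "gw_kernel d 0 z = return_pmf z"
| "gw_kernel d (Suc t) z = bind_pmf (sum_iid d z) (gw_kernel d t)"

definition gw_size :: "nat pmf \<Rightarrow> nat \<Rightarrow> nat pmf" where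
  "gw_size d i = map_pmf (\<lambda>zs. zs ! i) (gw_gens d i)"

lemma gw_kernel_Suc_right: "gw_kernel d (Suc t) z = bind_pmf (gw_kernel d t z) (sum_iid d)"
proof (induction t arbitrary: z)
  case 0
  have "gw_kernel d 0 = return_pmf" by (rule ext) simp
  then show ?case by (simp add: bind_return_pmf bind_return_pmf')
next
  case (Suc t)
  have "gw_kernel d (Suc t) = (\<lambda>y. bind_pmf (gw_kernel d t y) (sum_iid d))"
    using Suc by (intro ext)
  then have "gw_kernel d (Suc (Suc t)) z =
      bind_pmf (sum_iid d z) (\<lambda>y. bind_pmf (gw_kernel d t y) (sum_iid d))"
    by (simp only: gw_kernel.simps(2)[of d "Suc t"])
  then show ?case by (simp add: bind_assoc_pmf)
qed

lemma gw_kernel_from_0: "gw_kernel d t 0 = return_pmf 0"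
  by (induction t) (simp_all add: bind_return_pmf)

lemma length_gw_gens: "zs \<in> set_pmf (gw_gens d n) \<Longrightarrow> length zs = Suc n"
  by (induction n arbitrary: zs) auto

lemma last_gw_gens: "zs \<in> set_pmf (gw_gens d n) \<Longrightarrow> last zs = zs ! n"
  by (drule length_gw_gens) (cases zs rule: rev_cases, auto)

lemma gw_size_0: "gw_size d 0 = return_pmf 1"
  by (simp add: gw_size_def)

lemma gw_size_Suc: "gw_size d (Suc i) = bind_pmf (gw_size d i) (sum_iid d)"
proof -
  have "gw_size d (Suc i) = bind_pmf (gw_gens d i) (\<lambda>zs. sum_iid d (zs ! i))"
    unfolding gw_size_def
    by (auto simp: map_bind_pmf map_pmf_comp nth_append last_gw_gens length_gw_gens
             intro!: bind_pmf_cong)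
  then show ?thesis by (simp add: gw_size_def bind_map_pmf)
qed

lemma map_pmf_gw_gens_pair:
  assumes "i \<le> n"
  shows "map_pmf (\<lambda>zs. (zs ! i, zs ! n)) (gw_gens d n) =
         bind_pmf (gw_size d i) (\<lambda>z. map_pmf (Pair z) (gw_kernel d (n - i) z))"
  using assms
proof (induction n rule: dec_induct)
  case base
  show ?case
    by (simp add: gw_size_def bind_map_pmf map_pmf_def bind_return_pmf bind_assoc_pmf)
next
  case (step n)
  have "map_pmf (\<lambda>zs. (zs ! i, zs ! Suc n)) (gw_gens d (Suc n)) =
        bind_pmf (map_pmf (\<lambda>zs. (zs ! i, zs ! n)) (gw_gens d n))
          (\<lambda>(a, b). map_pmf (Pair a) (sum_iid d b))"
    using step(1)
    by (auto simp: map_bind_pmf map_pmf_comp bind_map_pmf nth_append last_gw_gens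
             dest: length_gw_gens intro!: bind_pmf_cong map_pmf_cong)
  also have "\<dots> = bind_pmf (gw_size d i)
      (\<lambda>z. map_pmf (Pair z) (bind_pmf (gw_kernel d (n - i) z) (sum_iid d)))"
    by (simp add: step.IH bind_assoc_pmf bind_map_pmf map_bind_pmf)
  also have "\<dots> = bind_pmf (gw_size d i) (\<lambda>z. map_pmf (Pair z) (gw_kernel d (Suc n - i) z))"
    using step(1) by (simp only: Suc_diff_le gw_kernel_Suc_right)
  finally show ?case .
qed

lemma map_pmf_nth_gw_gens:
  assumes "i \<le> n"
  shows "map_pmf (\<lambda>zs. zs ! i) (gw_gens d n) = gw_size d i"
proof -
  have "map_pmf (\<lambda>zs. zs ! i) (gw_gens d n) =
        map_pmf fst (map_pmf (\<lambda>zs. (zs ! i, zs ! n)) (gw_gens d n))"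
    by (simp add: map_pmf_comp)
  also have "\<dots> = gw_size d i"
    by (simp add: map_pmf_gw_gens_pair[OF assms] map_bind_pmf map_pmf_comp bind_return_pmf'
             flip: map_pmf_def)
  finally show ?thesis .
qed

lemma nn_integral_gw_gens_pair:
  assumes "i \<le> n"
  shows "(\<integral>\<^sup>+zs. F (zs ! i) (zs ! n) \<partial>gw_gens d n) =
         (\<integral>\<^sup>+z. (\<integral>\<^sup>+w. F z w \<partial>gw_kernel d (n - i) z) \<partial>gw_size d i)"
proof -
  have "(\<integral>\<^sup>+zs. F (zs ! i) (zs ! n) \<partial>gw_gens d n) =
        (\<integral>\<^sup>+zw. case_prod F zw \<partial>map_pmf (\<lambda>zs. (zs ! i, zs ! n)) (gw_gens d n))"
    by simp
  then show ?thesis by (simp add: map_pmf_gw_gens_pair[OF assms])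
qed

lemma nn_integral_nth_gw_gens:
  assumes "i \<le> n"
  shows "(\<integral>\<^sup>+zs. g (zs ! i) \<partial>gw_gens d n) = (\<integral>\<^sup>+z. g z \<partial>gw_size d i)"
  unfolding map_pmf_nth_gw_gens[OF assms, symmetric] by simp

lemma nn_integral_sum_iid_real:
  "(\<integral>\<^sup>+y. ennreal (real y) \<partial>sum_iid d z) = of_nat z * (\<integral>\<^sup>+x. ennreal (real x) \<partial>d)"
proof (induction z)
  case 0
  then show ?case by simp
next
  case (Suc z)
  let ?m = "\<integral>\<^sup>+x. ennreal (real x) \<partial>d"
  have "(\<integral>\<^sup>+y. ennreal (real y) \<partial>sum_iid d (Suc z)) =
        (\<integral>\<^sup>+s. (\<integral>\<^sup>+x. ennreal (real s) + ennreal (real x) \<partial>d) \<partial>sum_iid d z)"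
    by (simp add: ennreal_plus[symmetric] del: ennreal_plus)
  also have "\<dots> = (\<integral>\<^sup>+s. ennreal (real s) + ?m \<partial>sum_iid d z)"
    by (simp add: nn_integral_add measure_pmf.emeasure_space_1)
  also have "\<dots> = of_nat (Suc z) * ?m"
    using Suc by (simp add: nn_integral_add measure_pmf.emeasure_space_1 distrib_right)
  finally show ?case .
qed

lemma nn_integral_gw_size_real:
  "(\<integral>\<^sup>+y. ennreal (real y) \<partial>gw_size d i) = (\<integral>\<^sup>+x. ennreal (real x) \<partial>d) ^ i"
proof (induction i)
  case 0
  then show ?case by (simp add: gw_size_0)
next
  case (Suc i)
  have "(\<integral>\<^sup>+y. ennreal (real y) \<partial>gw_size d (Suc i)) =
        (\<integral>\<^sup>+z. ennreal (real z) * (\<integral>\<^sup>+x. ennreal (real x) \<partial>d) \<partial>gw_size d i)"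
    by (simp add: gw_size_Suc nn_integral_sum_iid_real ennreal_of_nat_eq_real_of_nat)
  then show ?case by (simp add: nn_integral_multc Suc mult.commute)
qed

lemma nn_integral_sum_iid_antimono:
  fixes g :: "nat \<Rightarrow> ennreal"
  assumes "antimono g" "z \<le> z'"
  shows "(\<integral>\<^sup>+y. g y \<partial>sum_iid d z') \<le> (\<integral>\<^sup>+y. g y \<partial>sum_iid d z)"
  using assms(2)
proof (induction z' rule: dec_induct)
  case base
  then show ?case by simp
next
  case (step z')
  have "(\<integral>\<^sup>+y. g y \<partial>sum_iid d (Suc z')) = (\<integral>\<^sup>+s. (\<integral>\<^sup>+x. g (s + x) \<partial>d) \<partial>sum_iid d z')"
    by simp
  also have "\<dots> \<le> (\<integral>\<^sup>+s. (\<integral>\<^sup>+x. g s \<partial>d) \<partial>sum_iid d z')"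
    using assms(1) by (intro nn_integral_mono) (simp add: antimonoD)
  also have "\<dots> = (\<integral>\<^sup>+y. g y \<partial>sum_iid d z')"
    by (simp add: measure_pmf.emeasure_space_1)
  finally show ?case using step.IH by (rule order_trans)
qed

lemma antimono_gw_kernel_extinct: "antimono (\<lambda>z. pmf (gw_kernel d t z) 0)"
proof -
  have "antimono (\<lambda>z. ennreal (pmf (gw_kernel d t z) 0))"
  proof (induction t)
    case 0
    show ?case by (auto intro!: antimonoI split: split_indicator)
  next
    case (Suc t)
    show ?case
      using nn_integral_sum_iid_antimono[OF Suc.IH]
      by (auto intro!: antimonoI simp: ennreal_pmf_bind)
  qed
  then show ?thesis by (auto intro!: antimonoI dest: antimonoD)
qed

lemma zero_in_set_sum_iid: "0 \<in> set_pmf d \<Longrightarrow> 0 \<in> set_pmf (sum_iid d z)"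
  by (induction z) force+

lemma extinct_path_in_gw_gens:
  assumes "0 \<in> set_pmf d"
  shows "1 # replicate n 0 \<in> set_pmf (gw_gens d n)"
proof (induction n)
  case 0
  show ?case by simp
next
  case (Suc n)
  have "0 \<in> set_pmf (sum_iid d (last (1 # replicate n 0)))"
    by (rule zero_in_set_sum_iid[OF assms])
  then have "(1 # replicate n 0) @ [0] \<in> set_pmf (gw_gens d (Suc n))"
    using Suc by (auto intro!: bexI[of _ "1 # replicate n 0"])
  then show ?case by (simp add: replicate_append_same)
qed

lemma gw_gens_extinct_nonempty:
  assumes "0 \<in> set_pmf d" "1 \<le> n" "n \<le> m"
  shows "set_pmf (gw_gens d m) \<inter> {zs. zs ! n = 0} \<noteq> {}"
proof -
  have "(1 # replicate m 0) ! n = 0" using assms(2,3) by (cases n) auto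
  then show ?thesis using extinct_path_in_gw_gens[OF assms(1), of m] by blast
qed

section \<open>Conditioning on extinction by generation n\<close>

lemma nn_integral_cond_pmf:
  assumes "set_pmf p \<inter> s \<noteq> {}"
  shows "(\<integral>\<^sup>+x. f x \<partial>cond_pmf p s) = (\<integral>\<^sup>+x. indicator s x * f x \<partial>p) / emeasure p s"
proof -
  have pos: "measure p s > 0" using assms measure_pmf_posI by (metis disjoint_iff)
  have "(\<integral>\<^sup>+x. f x \<partial>cond_pmf p s) =
        (\<integral>\<^sup>+x. ennreal (pmf p x) * (indicator s x * f x) / ennreal (measure p s) \<partial>count_space UNIV)"
    unfolding nn_integral_measure_pmf
    using pos by (intro nn_integral_cong)
      (auto simp: pmf_cond[OF assms] divide_ennreal[symmetric] ennreal_times_divide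
                  ennreal_divide_times mult.assoc split: split_indicator)
  also have "\<dots> = (\<integral>\<^sup>+x. indicator s x * f x \<partial>p) / emeasure p s"
    by (simp add: nn_integral_divide nn_integral_measure_pmf measure_pmf.emeasure_eq_measure)
  finally show ?thesis .
qed

lemma nn_integral_gw_gens_extinct:
  assumes "i \<le> n"
  shows "(\<integral>\<^sup>+zs. indicator {zs. zs ! n = 0} zs * f (zs ! i) \<partial>gw_gens d n) =
         (\<integral>\<^sup>+z. f z * ennreal (pmf (gw_kernel d (n - i) z) 0) \<partial>gw_size d i)"
proof -
  have "(\<integral>\<^sup>+zs. indicator {zs. zs ! n = 0} zs * f (zs ! i) \<partial>gw_gens d n) =
        (\<integral>\<^sup>+zs. f (zs ! i) * indicator {0} (zs ! n) \<partial>gw_gens d n)"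
    by (intro nn_integral_cong) (simp split: split_indicator)
  also have "\<dots> = (\<integral>\<^sup>+z. (\<integral>\<^sup>+w. f z * indicator {0} w \<partial>gw_kernel d (n - i) z) \<partial>gw_size d i)"
    by (rule nn_integral_gw_gens_pair[OF assms])
  also have "\<dots> = (\<integral>\<^sup>+z. f z * ennreal (pmf (gw_kernel d (n - i) z) 0) \<partial>gw_size d i)"
    by (simp add: nn_integral_cmult emeasure_pmf_single)
  finally show ?thesis .
qed

lemma emeasure_gw_gens_extinct:
  assumes "i \<le> n"
  shows "emeasure (gw_gens d n) {zs. zs ! n = 0} =
         (\<integral>\<^sup>+z. ennreal (pmf (gw_kernel d (n - i) z) 0) \<partial>gw_size d i)"
  using nn_integral_gw_gens_extinct[OF assms, of d "\<lambda>_. 1"] by simp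

lemma nn_integral_cond_gw_gens_antimono:
  fixes f :: "nat \<Rightarrow> real"
  assumes "0 \<in> set_pmf d" "1 \<le> n" "i \<le> n" "antimono f" "\<And>z. 0 \<le> f z"
  shows "(\<integral>\<^sup>+zs. f (zs ! i) \<partial>gw_gens d n) \<le>
         (\<integral>\<^sup>+zs. f (zs ! i) \<partial>cond_pmf (gw_gens d n) {zs. zs ! n = 0})"
proof -
  let ?G = "gw_gens d n" and ?B = "{zs. zs ! n = 0}"
  let ?u = "\<lambda>z. pmf (gw_kernel d (n - i) z) 0"
  have ne: "set_pmf ?G \<inter> ?B \<noteq> {}" using gw_gens_extinct_nonempty[OF assms(1,2) order_refl] .
  then have E: "emeasure ?G ?B \<noteq> 0" "emeasure ?G ?B \<noteq> top"
    by (auto simp: measure_pmf.emeasure_eq_measure measure_pmf_zero_iff)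
  have "(\<integral>\<^sup>+zs. f (zs ! i) \<partial>?G) * emeasure ?G ?B =
        (\<integral>\<^sup>+z. f z \<partial>gw_size d i) * (\<integral>\<^sup>+z. ?u z \<partial>gw_size d i)"
    by (simp only: nn_integral_nth_gw_gens[OF assms(3), where g="\<lambda>z. ennreal (f z)"]
        emeasure_gw_gens_extinct[OF assms(3)])
  also have "\<dots> \<le> (\<integral>\<^sup>+z. ennreal (f z) * ennreal (?u z) \<partial>gw_size d i)"
    using assms(4,5) antimono_gw_kernel_extinct
    by (intro nn_integral_pmf_similarly_ordered antimono_similarly_ordered) auto
  also have "\<dots> = (\<integral>\<^sup>+zs. indicator ?B zs * ennreal (f (zs ! i)) \<partial>?G)"
    by (rule nn_integral_gw_gens_extinct[OF assms(3), symmetric])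
  finally have "(\<integral>\<^sup>+zs. f (zs ! i) \<partial>?G) * emeasure ?G ?B / emeasure ?G ?B \<le>
                (\<integral>\<^sup>+zs. indicator ?B zs * ennreal (f (zs ! i)) \<partial>?G) / emeasure ?G ?B"
    by (rule divide_right_mono_ennreal)
  then show ?thesis using E by (simp add: nn_integral_cond_pmf[OF ne] mult_divide_eq_ennreal)
qed

lemma nn_integral_cond_gw_gens_mono:
  fixes f :: "nat \<Rightarrow> real"
  assumes "0 \<in> set_pmf d" "1 \<le> n" "i \<le> n" "mono f" "\<And>z. 0 \<le> f z"
  shows "(\<integral>\<^sup>+zs. f (zs ! i) \<partial>cond_pmf (gw_gens d n) {zs. zs ! n = 0}) \<le>
         (\<integral>\<^sup>+zs. f (zs ! i) \<partial>gw_gens d n)"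
proof -
  let ?G = "gw_gens d n" and ?B = "{zs. zs ! n = 0}"
  let ?u = "\<lambda>z. pmf (gw_kernel d (n - i) z) 0"
  have ne: "set_pmf ?G \<inter> ?B \<noteq> {}" using gw_gens_extinct_nonempty[OF assms(1,2) order_refl] .
  then have E: "emeasure ?G ?B > 0"
    using measure_pmf_zero_iff[of ?G ?B]
    by (simp add: measure_pmf.emeasure_eq_measure zero_less_measure_iff)
  have opposite: "(f x - f y) * (?u x - ?u y) \<le> 0" for x y
  proof -
    have "antimono (\<lambda>z. - f z)" using assms(4) by (auto intro!: antimonoI dest: monoD)
    from antimono_similarly_ordered[OF this antimono_gw_kernel_extinct]
    show ?thesis by (simp add: algebra_simps)
  qed
  have "(\<integral>\<^sup>+zs. indicator ?B zs * ennreal (f (zs ! i)) \<partial>?G) =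
        (\<integral>\<^sup>+z. ennreal (f z) * ennreal (?u z) \<partial>gw_size d i)"
    by (rule nn_integral_gw_gens_extinct[OF assms(3)])
  also have "\<dots> \<le> (\<integral>\<^sup>+z. f z \<partial>gw_size d i) * (\<integral>\<^sup>+z. ?u z \<partial>gw_size d i)"
    using assms(5) opposite by (intro nn_integral_pmf_oppositely_ordered) auto
  also have "\<dots> = emeasure ?G ?B * (\<integral>\<^sup>+zs. f (zs ! i) \<partial>?G)"
    by (simp only: nn_integral_nth_gw_gens[OF assms(3), where g="\<lambda>z. ennreal (f z)"]
        emeasure_gw_gens_extinct[OF assms(3)] mult.commute)
  finally show ?thesis
    unfolding nn_integral_cond_pmf[OF ne] by (rule divide_le_posI_ennreal[OF E])
qed

lemma measure_cond_gw_gens_nth_le: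
  assumes "0 \<in> set_pmf d" "1 \<le> n" "i \<le> n"
  shows "measure (gw_gens d n) {zs. zs ! i \<le> k} \<le>
         measure (cond_pmf (gw_gens d n) {zs. zs ! n = 0}) {zs. zs ! i \<le> k}"
proof -
  have emeasure_as_integral: "emeasure M {zs. zs ! i \<le> k} =
      (\<integral>\<^sup>+zs. ennreal (indicator {..k} (zs ! i)) \<partial>M)" for M :: "nat list pmf"
  proof -
    have "(\<integral>\<^sup>+zs. ennreal (indicator {..k} (zs ! i)) \<partial>M) =
          (\<integral>\<^sup>+zs. indicator {zs. zs ! i \<le> k} zs \<partial>M)"
      by (intro nn_integral_cong) (simp split: split_indicator)
    then show ?thesis by simp
  qed
  have "antimono (\<lambda>z. indicator {..k} z :: real)"
    by (auto intro!: antimonoI split: split_indicator)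
  then have "emeasure (gw_gens d n) {zs. zs ! i \<le> k} \<le>
             emeasure (cond_pmf (gw_gens d n) {zs. zs ! n = 0}) {zs. zs ! i \<le> k}"
    unfolding emeasure_as_integral using assms by (intro nn_integral_cond_gw_gens_antimono) auto
  then show ?thesis by (simp add: measure_pmf.emeasure_eq_measure)
qed

lemma nn_integral_cond_gw_gens_nth:
  assumes "0 \<in> set_pmf d" "1 \<le> n"
  shows "(\<integral>\<^sup>+zs. ennreal (real (zs ! i)) \<partial>cond_pmf (gw_gens d (max n i)) {zs. zs ! n = 0})
         \<le> (\<integral>\<^sup>+x. ennreal (real x) \<partial>d) ^ i"
proof (cases "i \<le> n")
  case True
  then have "(\<integral>\<^sup>+zs. ennreal (real (zs ! i)) \<partial>cond_pmf (gw_gens d (max n i)) {zs. zs ! n = 0})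
        \<le> (\<integral>\<^sup>+zs. ennreal (real (zs ! i)) \<partial>gw_gens d n)"
    using assms by (simp add: max_absorb1 nn_integral_cond_gw_gens_mono mono_def)
  also have "\<dots> = (\<integral>\<^sup>+x. ennreal (real x) \<partial>d) ^ i"
    using nn_integral_nth_gw_gens[OF True, where g="\<lambda>z. ennreal (real z)"]
    by (simp add: nn_integral_gw_size_real)
  finally show ?thesis .
next
  case False
  then have "n \<le> i" by simp
  have "(\<integral>\<^sup>+zs. indicator {zs. zs ! n = 0} zs * ennreal (real (zs ! i)) \<partial>gw_gens d i) =
        (\<integral>\<^sup>+zs. indicator {0} (zs ! n) * ennreal (real (zs ! i)) \<partial>gw_gens d i)"
    by (intro nn_integral_cong) (simp split: split_indicator)
  also have "\<dots> = (\<integral>\<^sup>+z. (\<integral>\<^sup>+w. indicator {0} z * ennreal (real w) \<partial>gw_kernel d (i - n) z)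
                    \<partial>gw_size d n)"
    by (rule nn_integral_gw_gens_pair[OF \<open>n \<le> i\<close>])
  also have "\<dots> = 0"
  proof (rule nn_integral_zero', rule AE_I2)
    fix z
    show "(\<integral>\<^sup>+w. indicator {0} z * ennreal (real w) \<partial>gw_kernel d (i - n) z) = 0"
      by (cases "z = 0") (simp_all add: gw_kernel_from_0)
  qed
  finally show ?thesis
    using gw_gens_extinct_nonempty[OF assms \<open>n \<le> i\<close>] \<open>n \<le> i\<close>
    by (simp add: max_absorb2 nn_integral_cond_pmf)
qed

theorem lemma3:
  fixes p :: "nat \<Rightarrow> real" and q :: real
  assumes nonneg: "\<forall>k. p k \<ge> 0"
    and prob: "p sums 1"
    and p0: "p 0 > 0"
    and mean_fin: "summable (\<lambda>k. real k * p k)"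
    and supercrit: "(\<Sum>k. real k * p k) > 1"
    and q_range: "0 < q" "q < 1"
    and q_fix: "gen p q = q"
  shows "(\<forall>k n. n \<ge> 1 \<longrightarrow>
            measure_pmf.prob (cond_pmf (gw_gens (offspring_pmf p q) n) {zs. zs ! n = 0})
                {zs. zs ! 1 \<le> k}
            \<ge> measure_pmf.prob (gw_gens (offspring_pmf p q) n) {zs. zs ! 1 \<le> k})
       \<and> (\<forall>i n. n \<ge> 1 \<longrightarrow>
            (\<integral>\<^sup>+ zs. ennreal (real (zs ! i))
               \<partial>measure_pmf (cond_pmf (gw_gens (offspring_pmf p q) (max n i)) {zs. zs ! n = 0}))
            \<le> ennreal (deriv (gen p) q ^ i))"
proof -
  note offspring = nonneg[rule_format] sums_summable[OF prob] q_range q_fix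
  have d0: "0 \<in> set_pmf (offspring_pmf p q)"
    using p0 q_range by (simp add: set_pmf_iff pmf_offspring_pmf[OF offspring])
  have "0 \<le> deriv (gen p) q"
    using offspring(1,3) by (intro sums_le[OF _ sums_zero sums_deriv_gen[OF offspring(2-4)]]) simp
  then have mean_pow:
    "(\<integral>\<^sup>+x. ennreal (real x) \<partial>offspring_pmf p q) ^ i = ennreal (deriv (gen p) q ^ i)" for i
    by (simp add: nn_integral_offspring_pmf_real[OF offspring] ennreal_power)
  show ?thesis
  proof (intro conjI allI impI)
    fix k n :: nat
    assume "1 \<le> n"
    then show "measure (gw_gens (offspring_pmf p q) n) {zs. zs ! 1 \<le> k} \<le>
        measure (cond_pmf (gw_gens (offspring_pmf p q) n) {zs. zs ! n = 0}) {zs. zs ! 1 \<le> k}"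
      by (rule measure_cond_gw_gens_nth_le[OF d0 _ \<open>1 \<le> n\<close>])
  next
    fix i n :: nat
    assume "1 \<le> n"
    from nn_integral_cond_gw_gens_nth[OF d0 this, of i]
    show "(\<integral>\<^sup>+zs. ennreal (real (zs ! i))
             \<partial>cond_pmf (gw_gens (offspring_pmf p q) (max n i)) {zs. zs ! n = 0})
          \<le> ennreal (deriv (gen p) q ^ i)"
      by (simp only: mean_pow)
  qed
qed

end
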